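(* Let $V$ be a finite set, $\pi$ a probability distribution on $V$, $\mathcal{D}$ a finite set, and for all $x\in\mathcal{D}$ let $M_x\subseteq V$ with $\Pr_{v\sim\pi}[v\in M_x]=\varepsilon$ for a fixed $\varepsilon\in(0,1)$. Work in $\mathbb{C}^{\{\perp\}\cup V}$ (with $\perp\notin V$), let $O_x$ be operators on a space $\mathcal{H}$ with $O_x^2=I$, and set \[|\psi_x\rangle=\frac{1}{\sqrt{\varepsilon}}\sum_{v\in M_x}\sqrt{\pi_v}\,|v\rangle.\] Define $R=\{(|\perp\rangle+|\psi_x\rangle,\ |\perp\rangle-|\psi_x\rangle,\ O_x)\}_{x\in\mathcal{D}}$ and $R'=\{(\mathbb{1}_\perp-\tfrac{1}{\varepsilon}\pi|_{M_x},\ \mathbb{1}_\perp+\mathbb{1}_{M_x},\ O_x)\}_{x\in\mathcal{D}}$, where $\pi|_{M_x}$ is the vector equal to $\pi$ on $M_x$ and $0$ elsewhere and $\mathbb{1}_S$ is the indicator vector of $S$. Then the sets of feasible solutions of $R$ and $R'$ are identical, and $R'$ is a hyperedge problem.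
   Context: A state-reflection problem $\{(|\sigma_x^+\rangle,|\sigma_x^-\rangle,O_x)\}_{x\in\mathcal{D}}$ consists of orthogonal vectors $|\sigma_x^\pm\rangle$ in a finite-dimensional space $\mathcal{V}$ and operators $O_x$ on $\mathcal{H}$ with $O_x^2=I$; a feasible solution is a finite-dimensional space $\mathcal{W}$ and vectors $|w_x^s\rangle\in\mathcal{H}\otimes\mathcal{W}$ ($s\in\{+,-\}$) with $\langle\sigma_x^s|\sigma_y^t\rangle-st\langle\sigma_x^s|\sigma_y^t\rangle=\langle w_x^s|((I-O_x^\dagger O_y)\otimes I)|w_y^t\rangle$ for all $x,y$ and $s,t$. A hyperedge problem on a finite set $V'$ is a state-reflection problem over $\mathbb{C}^{V'}$ with $|\sigma_x^+\rangle=\delta_x$, $|\sigma_x^-\rangle=U_x$ such that $\sum_{v}(\delta_x)_v=0$ and $U_x$ is constant on the support of $\delta_x$, for every $x$. *)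

theory Defs
  imports Complex_Main
begin

text \<open>Vectors in C^A are functions A-coordinates to complex; the coordinate set is explicit.
  The finite-dimensional space H is C^'h for a finite type 'h; operators on H are 'h x 'h matrices.
  A vector of H (x) W, with W = C^Wc for a finite coordinate set Wc, is a function on 'h x 'w
  (only coordinates in UNIV x Wc matter). Signs s in {+,-} are booleans: True = +, False = -.\<close>

definition cinner :: "'a set \<Rightarrow> ('a \<Rightarrow> complex) \<Rightarrow> ('a \<Rightarrow> complex) \<Rightarrow> complex" where
  "cinner A u v = (\<Sum>i\<in>A. cnj (u i) * v i)"

definition mmult :: "('h::finite \<Rightarrow> 'h \<Rightarrow> complex) \<Rightarrow> ('h \<Rightarrow> 'h \<Rightarrow> complex) \<Rightarrow> ('h \<Rightarrow> 'h \<Rightarrow> complex)" where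
  "mmult A B = (\<lambda>i j. \<Sum>k\<in>UNIV. A i k * B k j)"

definition madj :: "('h \<Rightarrow> 'h \<Rightarrow> complex) \<Rightarrow> ('h \<Rightarrow> 'h \<Rightarrow> complex)" where
  "madj A = (\<lambda>i j. cnj (A j i))"

definition midI :: "'h \<Rightarrow> 'h \<Rightarrow> complex" where
  "midI = (\<lambda>i j. if i = j then 1 else 0)"

definition tensor_id_apply :: "('h::finite \<Rightarrow> 'h \<Rightarrow> complex) \<Rightarrow> ('h \<times> 'w \<Rightarrow> complex) \<Rightarrow> ('h \<times> 'w \<Rightarrow> complex)" where
  "tensor_id_apply A w = (\<lambda>(i, a). \<Sum>j\<in>UNIV. A i j * w (j, a))"

definition sgnprod :: "bool \<Rightarrow> bool \<Rightarrow> complex" where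
  "sgnprod s t = (if s = t then 1 else -1)"

definition state_reflection_problem ::
  "'a set \<Rightarrow> 'd set \<Rightarrow> ('d \<Rightarrow> bool \<Rightarrow> 'a \<Rightarrow> complex) \<Rightarrow> ('d \<Rightarrow> 'h::finite \<Rightarrow> 'h \<Rightarrow> complex) \<Rightarrow> bool" where
  "state_reflection_problem Vc D \<sigma> Op \<longleftrightarrow>
     finite Vc \<and>
     (\<forall>x\<in>D. \<forall>s. \<forall>i. i \<notin> Vc \<longrightarrow> \<sigma> x s i = 0) \<and>
     (\<forall>x\<in>D. cinner Vc (\<sigma> x True) (\<sigma> x False) = 0) \<and>
     (\<forall>x\<in>D. mmult (Op x) (Op x) = midI)"

definition feasible_solution ::
  "'a set \<Rightarrow> 'd set \<Rightarrow> ('d \<Rightarrow> bool \<Rightarrow> 'a \<Rightarrow> complex) \<Rightarrow> ('d \<Rightarrow> 'h::finite \<Rightarrow> 'h \<Rightarrow> complex)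
    \<Rightarrow> 'w set \<Rightarrow> ('d \<Rightarrow> bool \<Rightarrow> 'h \<times> 'w \<Rightarrow> complex) \<Rightarrow> bool" where
  "feasible_solution Vc D \<sigma> Op Wc w \<longleftrightarrow>
     finite Wc \<and>
     (\<forall>x\<in>D. \<forall>y\<in>D. \<forall>s t.
        cinner Vc (\<sigma> x s) (\<sigma> y t) - sgnprod s t * cinner Vc (\<sigma> x s) (\<sigma> y t)
        = cinner (UNIV \<times> Wc) (w x s)
            (tensor_id_apply (\<lambda>i j. midI i j - mmult (madj (Op x)) (Op y) i j) (w y t)))"

definition hyperedge_problem ::
  "'a set \<Rightarrow> 'd set \<Rightarrow> ('d \<Rightarrow> bool \<Rightarrow> 'a \<Rightarrow> complex) \<Rightarrow> ('d \<Rightarrow> 'h::finite \<Rightarrow> 'h \<Rightarrow> complex) \<Rightarrow> bool" where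
  "hyperedge_problem Vc D \<sigma> Op \<longleftrightarrow>
     state_reflection_problem Vc D \<sigma> Op \<and>
     (\<forall>x\<in>D. (\<Sum>v\<in>Vc. \<sigma> x True v) = 0 \<and>
            (\<exists>c. \<forall>v\<in>Vc. \<sigma> x True v \<noteq> 0 \<longrightarrow> \<sigma> x False v = c))"


text \<open>Coordinates of C^({bot} u V) are 'v option, with None playing the role of bot (so bot is not in V).\<close>
definition ket_bot :: "'v option \<Rightarrow> complex" where
  "ket_bot = (\<lambda>i. if i = None then 1 else 0)"

definition psi_vec :: "('d \<Rightarrow> 'v set) \<Rightarrow> ('v \<Rightarrow> real) \<Rightarrow> real \<Rightarrow> 'd \<Rightarrow> 'v option \<Rightarrow> complex" where
  "psi_vec M \<pi> \<epsilon> x = (\<lambda>i. case i of None \<Rightarrow> 0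
      | Some v \<Rightarrow> if v \<in> M x then complex_of_real (sqrt (\<pi> v) / sqrt \<epsilon>) else 0)"

definition pi_restr :: "('d \<Rightarrow> 'v set) \<Rightarrow> ('v \<Rightarrow> real) \<Rightarrow> 'd \<Rightarrow> 'v option \<Rightarrow> complex" where
  "pi_restr M \<pi> x = (\<lambda>i. case i of None \<Rightarrow> 0
      | Some v \<Rightarrow> if v \<in> M x then complex_of_real (\<pi> v) else 0)"

definition ind_vec :: "('d \<Rightarrow> 'v set) \<Rightarrow> 'd \<Rightarrow> 'v option \<Rightarrow> complex" where
  "ind_vec M x = (\<lambda>i. case i of None \<Rightarrow> 0 | Some v \<Rightarrow> if v \<in> M x then 1 else 0)"

definition sigmaR :: "('d \<Rightarrow> 'v set) \<Rightarrow> ('v \<Rightarrow> real) \<Rightarrow> real \<Rightarrow> 'd \<Rightarrow> bool \<Rightarrow> 'v option \<Rightarrow> complex" where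
  "sigmaR M \<pi> \<epsilon> x s = (\<lambda>i. if s then ket_bot i + psi_vec M \<pi> \<epsilon> x i else ket_bot i - psi_vec M \<pi> \<epsilon> x i)"

definition sigmaR' :: "('d \<Rightarrow> 'v set) \<Rightarrow> ('v \<Rightarrow> real) \<Rightarrow> real \<Rightarrow> 'd \<Rightarrow> bool \<Rightarrow> 'v option \<Rightarrow> complex" where
  "sigmaR' M \<pi> \<epsilon> x s = (\<lambda>i. if s then ket_bot i - pi_restr M \<pi> x i / complex_of_real \<epsilon>
                                  else ket_bot i + ind_vec M x i)"

end

theory Submission
  imports Defs
begin

text \<open>A feasible solution constrains \<open>(1 - st) \<langle>\<sigma>\<^sub>x\<^sup>s|\<sigma>\<^sub>y\<^sup>t\<rangle>\<close>, which vanishes for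
  \<open>s = t\<close>; so two problems with the same reflections have the same feasible solutions as soon
  as their cross inner products (\<open>s \<noteq> t\<close>) agree. For \<open>R\<close> and \<open>R'\<close> alike these all equal
  \<open>1 - \<pi>(M\<^sub>x \<inter> M\<^sub>y)/\<epsilon>\<close>. For \<open>x = y\<close> this is \<open>1 - \<pi>(M\<^sub>x)/\<epsilon> = 0\<close>, which is also the
  coordinate sum of the \<open>+\<close> state of \<open>R'\<close>; hence \<open>R'\<close> is a hyperedge problem.\<close>

lemma cinner_insert_None_Some:
  assumes "finite V"
  shows "cinner (insert None (Some ` V)) u w
       = cnj (u None) * w None + (\<Sum>v\<in>V. cnj (u (Some v)) * w (Some v))"
  using assms by (simp add: cinner_def sum.reindex image_iff)

lemma cinner_insert_None_Some_eq_one_minus: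
  assumes "finite V"
    and "cnj (u None) * w None = 1"
    and "\<And>v. v \<in> V \<Longrightarrow> cnj (u (Some v)) * w (Some v) = - (if v \<in> A then of_real (f v) else 0)"
  shows "cinner (insert None (Some ` V)) u w = 1 - (\<Sum>v\<in>V \<inter> A. of_real (f v))"
proof -
  have "(\<Sum>v\<in>V. cnj (u (Some v)) * w (Some v)) = - (\<Sum>v\<in>V. if v \<in> A then of_real (f v) else 0)"
    using assms(3) by (simp add: sum_negf)
  also have "\<dots> = - (\<Sum>v\<in>V \<inter> A. of_real (f v))"
    using sum.inter_restrict[OF \<open>finite V\<close>, of "\<lambda>v. of_real (f v) :: complex" A] by simp
  finally show ?thesis
    using assms(1,2) by (simp add: cinner_insert_None_Some)
qed

lemma feasible_solution_cong_cross:
  assumes "\<And>x y s t. x \<in> D \<Longrightarrow> y \<in> D \<Longrightarrow> s \<noteq> t \<Longrightarrow>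
             cinner Vc (\<sigma> x s) (\<sigma> y t) = cinner Vc (\<sigma>' x s) (\<sigma>' y t)"
  shows "feasible_solution Vc D \<sigma> Op Wc w \<longleftrightarrow> feasible_solution Vc D \<sigma>' Op Wc w"
proof -
  have "cinner Vc (\<sigma> x s) (\<sigma> y t) - sgnprod s t * cinner Vc (\<sigma> x s) (\<sigma> y t)
      = cinner Vc (\<sigma>' x s) (\<sigma>' y t) - sgnprod s t * cinner Vc (\<sigma>' x s) (\<sigma>' y t)"
    if "x \<in> D" "y \<in> D" for x y s t
    using assms[OF that] by (cases "s = t") (auto simp: sgnprod_def)
  then show ?thesis
    unfolding feasible_solution_def by simp
qed

lemma cinner_sigmaR_cross:
  assumes "finite V" and "\<forall>v\<in>V. 0 \<le> \<pi> v" and "0 \<le> \<epsilon>" and "s \<noteq> t"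
  shows "cinner (insert None (Some ` V)) (sigmaR M \<pi> \<epsilon> x s) (sigmaR M \<pi> \<epsilon> y t)
       = 1 - (\<Sum>v\<in>V \<inter> (M x \<inter> M y). of_real (\<pi> v / \<epsilon>))"
proof (rule cinner_insert_None_Some_eq_one_minus[OF \<open>finite V\<close>])
  fix v assume "v \<in> V"
  then have "sqrt (\<pi> v) / sqrt \<epsilon> * (sqrt (\<pi> v) / sqrt \<epsilon>) = \<pi> v / \<epsilon>"
    using assms(2,3) by (simp add: real_sqrt_mult[symmetric] real_sqrt_divide[symmetric])
  then have "of_real (sqrt (\<pi> v) / sqrt \<epsilon>) * of_real (sqrt (\<pi> v) / sqrt \<epsilon>) = (of_real (\<pi> v / \<epsilon>) :: complex)"
    by (metis of_real_mult)
  then show "cnj (sigmaR M \<pi> \<epsilon> x s (Some v)) * sigmaR M \<pi> \<epsilon> y t (Some v)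
           = - (if v \<in> M x \<inter> M y then of_real (\<pi> v / \<epsilon>) else 0)"
    using \<open>s \<noteq> t\<close> by (cases s; cases t; simp add: sigmaR_def ket_bot_def psi_vec_def)
qed (use \<open>s \<noteq> t\<close> in \<open>cases s; simp add: sigmaR_def ket_bot_def psi_vec_def\<close>)

lemma cinner_sigmaR'_cross:
  assumes "finite V" and "s \<noteq> t"
  shows "cinner (insert None (Some ` V)) (sigmaR' M \<pi> \<epsilon> x s) (sigmaR' M \<pi> \<epsilon> y t)
       = 1 - (\<Sum>v\<in>V \<inter> (M x \<inter> M y). of_real (\<pi> v / \<epsilon>))"
  using assms(2)
  by (intro cinner_insert_None_Some_eq_one_minus[OF \<open>finite V\<close>])
     (cases s; cases t; simp add: sigmaR'_def ket_bot_def pi_restr_def ind_vec_def)+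

lemma sum_sigmaR'_True:
  assumes "finite V"
  shows "(\<Sum>i\<in>insert None (Some ` V). sigmaR' M \<pi> \<epsilon> x True i)
       = 1 - (\<Sum>v\<in>V \<inter> M x. of_real (\<pi> v / \<epsilon>))"
proof -
  have "(\<Sum>v\<in>V. sigmaR' M \<pi> \<epsilon> x True (Some v)) = - (\<Sum>v\<in>V. if v \<in> M x then of_real (\<pi> v / \<epsilon>) else 0)"
    unfolding sum_negf[symmetric]
    by (rule sum.cong) (simp_all add: sigmaR'_def ket_bot_def pi_restr_def)
  also have "\<dots> = - (\<Sum>v\<in>V \<inter> M x. of_real (\<pi> v / \<epsilon>))"
    using sum.inter_restrict[OF assms, of "\<lambda>v. of_real (\<pi> v / \<epsilon>) :: complex" "M x"] by simp
  finally show ?thesis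
    using assms by (simp add: sum.reindex image_iff sigmaR'_def ket_bot_def pi_restr_def)
qed

lemma hyperedge_problem_sigmaR':
  assumes "finite V" and M_sub: "\<forall>x\<in>D. M x \<subseteq> V" and M_prob: "\<forall>x\<in>D. (\<Sum>v\<in>M x. \<pi> v) = \<epsilon>"
    and "\<epsilon> \<noteq> 0" and "\<forall>x\<in>D. mmult (Op x) (Op x) = midI"
  shows "hyperedge_problem (insert None (Some ` V)) D (sigmaR' M \<pi> \<epsilon>) Op"
proof -
  have normalized: "(\<Sum>v\<in>V \<inter> M x. of_real (\<pi> v / \<epsilon>) :: complex) = 1" if "x \<in> D" for x
  proof -
    have "(\<Sum>v\<in>V \<inter> M x. \<pi> v / \<epsilon>) = 1"
      using M_sub M_prob \<open>\<epsilon> \<noteq> 0\<close> that by (simp add: Int_absorb1 sum_divide_distrib[symmetric])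
    then show ?thesis
      by (metis of_real_1 of_real_sum)
  qed
  show ?thesis
    unfolding hyperedge_problem_def state_reflection_problem_def
  proof (intro conjI ballI allI impI)
    fix x assume x: "x \<in> D"
    show "cinner (insert None (Some ` V)) (sigmaR' M \<pi> \<epsilon> x True) (sigmaR' M \<pi> \<epsilon> x False) = 0"
      using cinner_sigmaR'_cross[OF \<open>finite V\<close>, of True False M \<pi> \<epsilon> x x] normalized[OF x] by simp
    show "(\<Sum>i\<in>insert None (Some ` V). sigmaR' M \<pi> \<epsilon> x True i) = 0"
      using sum_sigmaR'_True[OF \<open>finite V\<close>, of M \<pi> \<epsilon> x] normalized[OF x] by simp
    show "\<exists>c. \<forall>i\<in>insert None (Some ` V). sigmaR' M \<pi> \<epsilon> x True i \<noteq> 0 \<longrightarrow> sigmaR' M \<pi> \<epsilon> x False i = c"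
      by (rule exI[of _ 1]) (auto simp: sigmaR'_def ket_bot_def pi_restr_def ind_vec_def)
    fix s i assume "i \<notin> insert None (Some ` V)"
    then show "sigmaR' M \<pi> \<epsilon> x s i = 0"
      using M_sub x by (auto simp: sigmaR'_def ket_bot_def pi_restr_def ind_vec_def split: option.split)
  qed (use assms in auto)
qed

theorem theorem5p5:
  fixes V :: "'v set" and \<pi> :: "'v \<Rightarrow> real" and D :: "'d set" and M :: "'d \<Rightarrow> 'v set"
    and \<epsilon> :: real and Op :: "'d \<Rightarrow> 'h::finite \<Rightarrow> 'h \<Rightarrow> complex"
  assumes finV: "finite V"
    and pi_nonneg: "\<forall>v\<in>V. \<pi> v \<ge> 0"
    and pi_sum: "(\<Sum>v\<in>V. \<pi> v) = 1"
    and finD: "finite D"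
    and M_sub: "\<forall>x\<in>D. M x \<subseteq> V"
    and M_prob: "\<forall>x\<in>D. (\<Sum>v\<in>M x. \<pi> v) = \<epsilon>"
    and eps_pos: "0 < \<epsilon>" and eps_lt1: "\<epsilon> < 1"
    and O_inv: "\<forall>x\<in>D. mmult (Op x) (Op x) = midI"
  shows "(\<forall>(Wc::'w set) w.
            feasible_solution (insert None (Some ` V)) D (sigmaR M \<pi> \<epsilon>) Op Wc w
            \<longleftrightarrow> feasible_solution (insert None (Some ` V)) D (sigmaR' M \<pi> \<epsilon>) Op Wc w)
         \<and> hyperedge_problem (insert None (Some ` V)) D (sigmaR' M \<pi> \<epsilon>) Op"
proof
  let ?Vc = "insert None (Some ` V)"
  have same_cross: "cinner ?Vc (sigmaR M \<pi> \<epsilon> x s) (sigmaR M \<pi> \<epsilon> y t)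
                  = cinner ?Vc (sigmaR' M \<pi> \<epsilon> x s) (sigmaR' M \<pi> \<epsilon> y t)" if "s \<noteq> t" for x y s t
    using cinner_sigmaR_cross[OF finV pi_nonneg less_imp_le[OF eps_pos] that, where M=M and x=x and y=y]
      cinner_sigmaR'_cross[OF finV that, where M=M and \<pi>=\<pi> and \<epsilon>=\<epsilon> and x=x and y=y]
    by (simp only:)
  show "\<forall>(Wc::'w set) w. feasible_solution ?Vc D (sigmaR M \<pi> \<epsilon>) Op Wc w
                          \<longleftrightarrow> feasible_solution ?Vc D (sigmaR' M \<pi> \<epsilon>) Op Wc w"
    by (intro allI feasible_solution_cong_cross same_cross)
  show "hyperedge_problem ?Vc D (sigmaR' M \<pi> \<epsilon>) Op"
    using hyperedge_problem_sigmaR'[OF finV M_sub M_prob _ O_inv] eps_pos by simp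
qed

end
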